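(* Let $0<q<1$. Then \[ \sum_{n=0}^{\infty}\frac{(1-q^{4n+3})(1-q^{2n+1})(1/2|q^{2})_{n}^{2}(1/3|q^{2})_{n}(2/3|q^{2})_{n}}{(1-q^{2})(1-q^{2n+2})([n]_{q^{2}}!)^{2}(7/6|q^{2})_{n+1}(5/6|q^{2})_{n+1}}\,q^{2n} =\frac{[1/6]_{q^{2}}\,(q^{4/3},q^{2/3};q^{2})_{\infty}\,q^{1/4}}{[1/3]_{q^{2}}[2/3]_{q^{2}}[1/2]_{q^{2}}\,(q^{1/3},q^{5/3};q^{2})_{\infty}\,\pi_{q}}. \]
   Context: Let $0<q<1$ and write $q^{x}=e^{x\log q}$. $(z;q)_\infty=\prod_{k\ge0}(1-zq^k)$, $(z_1,z_2;q)_\infty=(z_1;q)_\infty(z_2;q)_\infty$. $[z]_{q^2}=\frac{1-q^{2z}}{1-q^2}$; for integers $n\ge0$, $(x|q^2)_n=\prod_{k=0}^{n-1}[x+k]_{q^2}$ (empty product $=1$); $[0]_{q^2}!=1$, $[n]_{q^2}!=\prod_{k=1}^n[k]_{q^2}$. $\pi_q=(1-q^2)q^{1/4}\frac{(q^2;q^2)_\infty^2}{(q;q^2)_\infty^2}$. *)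

theory Defs
  imports "HOL-Analysis.Analysis"
begin

definition qpoch_inf :: "real \<Rightarrow> real \<Rightarrow> real" where
  "qpoch_inf z q = (\<Prod>k. (1 - z * q ^ k))"

definition qnum :: "real \<Rightarrow> real \<Rightarrow> real" where
  "qnum Q z = (1 - Q powr z) / (1 - Q)"

definition qshift :: "real \<Rightarrow> real \<Rightarrow> nat \<Rightarrow> real" where
  "qshift Q x n = (\<Prod>k<n. qnum Q (x + real k))"

definition qfact :: "real \<Rightarrow> nat \<Rightarrow> real" where
  "qfact Q n = (\<Prod>k\<in>{1..n}. qnum Q (real k))"

definition qpi :: "real \<Rightarrow> real" where
  "qpi q = (1 - q\<^sup>2) * q powr (1/4) * (qpoch_inf (q\<^sup>2) (q\<^sup>2))\<^sup>2 / (qpoch_inf q (q\<^sup>2))\<^sup>2"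

end

theory Submission
  imports Defs
begin

text \<open>
  Put p = q^2, b = q, c = q^(2/3), d = q^(4/3).  After shifting (q;p)_n, (p;p)_n and the two
  products of length n+1 by one step, the summand becomes (1-q)/((1-q^(7/3))(1-q^(5/3))) times
  the term (1 - bcd p^(2k)) p^k (bcd,b,c,d;p)_k / (p,cdp,bdp,bcp;p)_k of a very-well-poised
  series with a = bcd.  That series telescopes, because
    (1-bcdz)(1-bz)(1-cz)(1-dz) - (1-z)(1-cdz)(1-bdz)(1-bcz) = (1-b)(1-c)(1-d)(1-bcdz^2) z,
  so its sum is (bcd,b,c,d;p)_inf / ((1-b)(1-c)(1-d)(p,cdp,bdp,bcp;p)_inf); shifting the
  infinite products on the right-hand side identifies the two values.  Writing q = x^3 makes
  every exponent an integer.
\<close>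

definition qpoch :: "real \<Rightarrow> real \<Rightarrow> nat \<Rightarrow> real" where
  "qpoch z Q n = (\<Prod>k<n. 1 - z * Q ^ k)"

lemma qpoch_0 [simp]: "qpoch z Q 0 = 1"
  by (simp add: qpoch_def)

lemma qpoch_Suc: "qpoch z Q (Suc n) = qpoch z Q n * (1 - z * Q ^ n)"
  by (simp add: qpoch_def)

lemma qpoch_Suc_shift: "qpoch z Q (Suc n) = (1 - z) * qpoch (z * Q) Q n"
  unfolding qpoch_def prod.lessThan_Suc_shift by (simp add: mult.assoc)

lemma mult_power_neq_one:
  fixes z Q :: real
  assumes "\<bar>z\<bar> < 1" "\<bar>Q\<bar> \<le> 1"
  shows "z * Q ^ k \<noteq> 1"
proof -
  have "\<bar>z * Q ^ k\<bar> = \<bar>z\<bar> * \<bar>Q\<bar> ^ k"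
    by (simp add: abs_mult power_abs)
  also have "\<dots> \<le> \<bar>z\<bar>"
    using assms by (simp add: mult_left_le power_le_one)
  finally have "\<bar>z * Q ^ k\<bar> \<le> \<bar>z\<bar>" .
  then show ?thesis using assms by auto
qed

lemma qpoch_nonzero: "\<bar>z\<bar> < 1 \<Longrightarrow> \<bar>Q\<bar> \<le> 1 \<Longrightarrow> qpoch z Q n \<noteq> 0"
  unfolding qpoch_def by (simp add: prod_zero_iff mult_power_neq_one)

lemma convergent_prod_qpoch:
  fixes z Q :: real
  assumes "\<bar>Q\<bar> < 1"
  shows "convergent_prod (\<lambda>k. 1 - z * Q ^ k)"
proof -
  have "summable (\<lambda>k. norm ((1 - z * Q ^ k) - 1))"
    using assms by (simp add: abs_mult power_abs summable_mult summable_geometric)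
  then show ?thesis
    by (intro abs_convergent_prod_imp_convergent_prod summable_imp_abs_convergent_prod)
qed

lemma qpoch_tendsto_qpoch_inf:
  "\<bar>Q\<bar> < 1 \<Longrightarrow> (\<lambda>n. qpoch z Q n) \<longlonglongrightarrow> qpoch_inf z Q"
  unfolding qpoch_def qpoch_inf_def
  by (intro has_prod_imp_tendsto' convergent_prod_has_prod convergent_prod_qpoch)

lemma qpoch_inf_shift:
  assumes "\<bar>Q\<bar> < 1"
  shows "qpoch_inf z Q = (1 - z) * qpoch_inf (z * Q) Q"
proof -
  have "(\<lambda>n. qpoch z Q (Suc n)) \<longlonglongrightarrow> qpoch_inf z Q"
    using qpoch_tendsto_qpoch_inf[OF assms] by (rule LIMSEQ_Suc)
  moreover have "(\<lambda>n. qpoch z Q (Suc n)) \<longlonglongrightarrow> (1 - z) * qpoch_inf (z * Q) Q"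
    unfolding qpoch_Suc_shift by (intro tendsto_mult tendsto_const qpoch_tendsto_qpoch_inf assms)
  ultimately show ?thesis by (rule LIMSEQ_unique)
qed

lemma qpoch_inf_nonzero:
  assumes "\<bar>z\<bar> < 1" "\<bar>Q\<bar> < 1"
  shows "qpoch_inf z Q \<noteq> 0"
  unfolding qpoch_inf_def
  using assms mult_power_neq_one[of z Q] by (intro prodinf_nonzero convergent_prod_qpoch) auto

text \<open>
  With a = bcd, vwp_num and vwp_den are (a,b,c,d;p)_n and (p,ap/b,ap/c,ap/d;p)_n, so vwp_term is
  the term of a very-well-poised series whose argument ap/(bcd) equals p.
\<close>

definition vwp_num :: "real \<Rightarrow> real \<Rightarrow> real \<Rightarrow> real \<Rightarrow> nat \<Rightarrow> real" where
  "vwp_num b c d p n = qpoch (b * c * d) p n * qpoch b p n * qpoch c p n * qpoch d p n"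

definition vwp_den :: "real \<Rightarrow> real \<Rightarrow> real \<Rightarrow> real \<Rightarrow> nat \<Rightarrow> real" where
  "vwp_den b c d p n = qpoch p p n * qpoch (c * d * p) p n * qpoch (b * d * p) p n * qpoch (b * c * p) p n"

definition vwp_term :: "real \<Rightarrow> real \<Rightarrow> real \<Rightarrow> real \<Rightarrow> nat \<Rightarrow> real" where
  "vwp_term b c d p k = (1 - b * c * d * p ^ (2 * k)) * p ^ k * vwp_num b c d p k / vwp_den b c d p k"

lemma vwp_num_Suc:
  "vwp_num b c d p (Suc n) = vwp_num b c d p n *
     ((1 - b * c * d * p ^ n) * (1 - b * p ^ n) * (1 - c * p ^ n) * (1 - d * p ^ n))"
  by (simp add: vwp_num_def qpoch_Suc)

lemma vwp_den_Suc:
  "vwp_den b c d p (Suc n) = vwp_den b c d p n *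
     ((1 - p ^ Suc n) * (1 - c * d * p ^ Suc n) * (1 - b * d * p ^ Suc n) * (1 - b * c * p ^ Suc n))"
  by (simp add: vwp_den_def qpoch_Suc mult_ac)

lemma abs_mult3_less_one:
  fixes x y z :: real
  assumes "\<bar>x\<bar> < 1" "\<bar>y\<bar> < 1" "\<bar>z\<bar> < 1"
  shows "\<bar>x * y * z\<bar> < 1"
  using abs_mult_less[of "x * y" 1 z 1] abs_mult_less[OF assms(1,2)] assms(3) by (simp add: abs_mult)

lemma vwp_den_nonzero:
  fixes b c d p :: real
  assumes "\<bar>b\<bar> < 1" "\<bar>c\<bar> < 1" "\<bar>d\<bar> < 1" "\<bar>p\<bar> < 1"
  shows "vwp_den b c d p n \<noteq> 0"
  using assms by (simp add: vwp_den_def qpoch_nonzero abs_mult3_less_one)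

lemma vwp_partial_sum:
  fixes b c d p :: real
  assumes "b \<noteq> 1" "c \<noteq> 1" "d \<noteq> 1" and den: "\<And>n. vwp_den b c d p n \<noteq> 0"
  shows "(\<Sum>k\<le>n. vwp_term b c d p k)
           = vwp_num b c d p (Suc n) / ((1 - b) * (1 - c) * (1 - d) * vwp_den b c d p n)"
proof (induction n)
  case 0
  then show ?case using assms by (simp add: vwp_term_def vwp_num_def vwp_den_def qpoch_def)
next
  case (Suc n)
  define z where "z = p ^ Suc n"
  define E where "E = (1 - b) * (1 - c) * (1 - d)"
  define G where "G = (1 - b * c * d * z) * (1 - b * z) * (1 - c * z) * (1 - d * z)"
  define F where "F = (1 - z) * (1 - c * d * z) * (1 - b * d * z) * (1 - b * c * z)"
  have telescoping: "G = F + (1 - b * c * d * z\<^sup>2) * z * E"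
    unfolding G_def F_def E_def by algebra
  have num: "vwp_num b c d p (Suc (Suc n)) = vwp_num b c d p (Suc n) * G"
    by (simp add: vwp_num_Suc G_def z_def)
  have den_Suc: "vwp_den b c d p (Suc n) = vwp_den b c d p n * F"
    by (simp add: vwp_den_Suc F_def z_def)
  have "p ^ (2 * Suc n) = z\<^sup>2"
    unfolding z_def by (rule power_even_eq)
  then have last_term: "vwp_term b c d p (Suc n)
      = (1 - b * c * d * z\<^sup>2) * z * vwp_num b c d p (Suc n) / (vwp_den b c d p n * F)"
    by (simp add: vwp_term_def den_Suc z_def)
  have nonzero: "E \<noteq> 0" "vwp_den b c d p n \<noteq> 0" "F \<noteq> 0"
    using assms den[of "Suc n"] by (auto simp: E_def den_Suc)
  have "(\<Sum>k\<le>Suc n. vwp_term b c d p k) = (\<Sum>k\<le>n. vwp_term b c d p k) + vwp_term b c d p (Suc n)"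
    by simp
  also have "\<dots> = vwp_num b c d p (Suc n) / (E * vwp_den b c d p n)
      + (1 - b * c * d * z\<^sup>2) * z * vwp_num b c d p (Suc n) / (vwp_den b c d p n * F)"
    by (simp add: Suc.IH last_term E_def)
  also have "\<dots> = vwp_num b c d p (Suc n) * G / (E * (vwp_den b c d p n * F))"
    using nonzero unfolding telescoping by (simp add: field_simps)
  finally show ?case
    by (simp add: num den_Suc E_def)
qed

lemma vwp_sums:
  fixes b c d p :: real
  assumes "\<bar>b\<bar> < 1" "\<bar>c\<bar> < 1" "\<bar>d\<bar> < 1" "\<bar>p\<bar> < 1"
  shows "vwp_term b c d p sums
    (qpoch_inf (b * c * d) p * qpoch_inf b p * qpoch_inf c p * qpoch_inf d p
     / ((1 - b) * (1 - c) * (1 - d)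
        * (qpoch_inf p p * qpoch_inf (c * d * p) p * qpoch_inf (b * d * p) p * qpoch_inf (b * c * p) p)))"
proof -
  have lim: "(\<lambda>n. qpoch z p n) \<longlonglongrightarrow> qpoch_inf z p" for z
    using assms(4) by (rule qpoch_tendsto_qpoch_inf)
  have "(\<lambda>n. vwp_num b c d p (Suc n)) \<longlonglongrightarrow>
      qpoch_inf (b * c * d) p * qpoch_inf b p * qpoch_inf c p * qpoch_inf d p"
    unfolding vwp_num_def by (intro tendsto_mult LIMSEQ_Suc lim)
  moreover have "(\<lambda>n. (1 - b) * (1 - c) * (1 - d) * vwp_den b c d p n) \<longlonglongrightarrow> (1 - b) * (1 - c) * (1 - d)
      * (qpoch_inf p p * qpoch_inf (c * d * p) p * qpoch_inf (b * d * p) p * qpoch_inf (b * c * p) p)"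
    unfolding vwp_den_def by (intro tendsto_mult tendsto_const lim)
  moreover have "(1 - b) * (1 - c) * (1 - d)
      * (qpoch_inf p p * qpoch_inf (c * d * p) p * qpoch_inf (b * d * p) p * qpoch_inf (b * c * p) p) \<noteq> 0"
    using assms by (auto simp: qpoch_inf_nonzero abs_mult3_less_one)
  ultimately show ?thesis
    unfolding sums_def_le using assms
    by (simp add: vwp_partial_sum vwp_den_nonzero tendsto_divide)
qed

lemma powr_of_power:
  fixes x r :: real
  assumes "0 < x" "real k * r = real m"
  shows "(x ^ k) powr r = x ^ m"
  using assms by (simp add: powr_realpow [symmetric] powr_powr)

lemma qshift_eq_qpoch:
  assumes "0 < Q"
  shows "qshift Q r n = qpoch (Q powr r) Q n / (1 - Q) ^ n"
proof -
  have "qnum Q (r + real k) = (1 - Q powr r * Q ^ k) / (1 - Q)" for k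
    using assms by (simp add: qnum_def powr_add powr_realpow)
  then show ?thesis
    by (simp add: qshift_def qpoch_def prod_dividef)
qed

lemma qfact_eq_qpoch:
  assumes "0 < Q"
  shows "qfact Q n = qpoch Q Q n / (1 - Q) ^ n"
proof (induction n)
  case 0
  then show ?case by (simp add: qfact_def)
next
  case (Suc n)
  have "qfact Q (Suc n) = qfact Q n * qnum Q (real (Suc n))"
    by (simp add: qfact_def atLeastAtMostSuc_conv mult.commute)
  also have "qnum Q (real (Suc n)) = (1 - Q * Q ^ n) / (1 - Q)"
    using assms by (simp only: qnum_def powr_realpow power_Suc)
  finally show ?case
    using Suc.IH by (simp add: qpoch_Suc mult.commute)
qed

lemma qshift_power_base:
  fixes x r :: real
  assumes "0 < x" "real N * r = real m"
  shows "qshift (x ^ N) r n = qpoch (x ^ m) (x ^ N) n / (1 - x ^ N) ^ n"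
  using assms by (simp add: qshift_eq_qpoch powr_of_power[OF assms])

lemma qnum_power_base:
  fixes x r :: real
  assumes "0 < x" "real N * r = real m"
  shows "qnum (x ^ N) r = (1 - x ^ m) / (1 - x ^ N)"
  by (simp add: qnum_def powr_of_power[OF assms])

lemma power_power_eq: "k * a = b \<Longrightarrow> ((x :: 'a :: monoid_mult) ^ k) ^ a = x ^ b"
  using power_mult[of x k a] by simp

lemma series_term_eq:
  fixes x :: real
  assumes x: "0 < x" "x < 1"
  shows "(1 - (x^3) ^ (4*n+3)) * (1 - (x^3) ^ (2*n+1)) * (qshift (x^6) (1/2) n)\<^sup>2
              * qshift (x^6) (1/3) n * qshift (x^6) (2/3) n
            / ((1 - x^6) * (1 - (x^3) ^ (2*n+2)) * (qfact (x^6) n)\<^sup>2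
              * qshift (x^6) (7/6) (n+1) * qshift (x^6) (5/6) (n+1)) * (x^3) ^ (2*n)
       = (1 - x^3) / ((1 - x^7) * (1 - x^5)) * vwp_term (x^3) (x^2) (x^4) (x^6) n"
proof -
  define P where "P m = qpoch (x ^ m) (x ^ 6) n" for m
  define D where "D m = 1 - x ^ m" for m
  have pow_lt: "x ^ m < 1" if "0 < m" for m
    using x that by (simp add: power_less_one_iff)
  have P_nonzero: "P m \<noteq> 0" if "0 < m" for m
    unfolding P_def using x pow_lt[OF that] pow_lt[of 6] by (intro qpoch_nonzero) auto
  have D_nonzero: "D m \<noteq> 0" if "0 < m" for m
    using pow_lt[OF that] by (simp add: D_def)
  have shift: "qpoch (x ^ m) (x ^ 6) (Suc n) = D m * P (m + 6)" for m
    by (simp add: P_def D_def qpoch_Suc_shift power_add)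
  have append: "qpoch (x ^ m) (x ^ 6) (Suc n) = P m * (1 - x ^ (6 * n + m))" for m
    by (simp add: P_def qpoch_Suc power_add power_mult)
  have "(x^3) ^ (2*n+1) = x ^ (6*n+3)"
    by (rule power_power_eq) simp
  then have "P 3 * (1 - (x^3) ^ (2*n+1)) = D 3 * P 9"
    using append[of 3] shift[of 3] by simp
  then have odd: "1 - (x^3) ^ (2*n+1) = D 3 * P 9 / P 3"
    using P_nonzero[of 3] by (simp add: field_simps)
  have "(x^3) ^ (2*n+2) = x ^ (6*n+6)"
    by (rule power_power_eq) simp
  then have "P 6 * (1 - (x^3) ^ (2*n+2)) = D 6 * P 12"
    using append[of 6] shift[of 6] by simp
  then have even: "1 - (x^3) ^ (2*n+2) = D 6 * P 12 / P 6"
    using P_nonzero[of 6] by (simp add: field_simps)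
  have qshifts: "qshift (x^6) (1/2) n = P 3 / D 6 ^ n" "qshift (x^6) (1/3) n = P 2 / D 6 ^ n"
    "qshift (x^6) (2/3) n = P 4 / D 6 ^ n" "qfact (x^6) n = P 6 / D 6 ^ n"
    "qshift (x^6) (7/6) (n+1) = D 7 * P 13 / D 6 ^ Suc n"
    "qshift (x^6) (5/6) (n+1) = D 5 * P 11 / D 6 ^ Suc n"
    using x by (simp_all add: qshift_power_base qfact_eq_qpoch shift P_def D_def)
  have products: "x^3 * x^2 * x^4 = x^9" "x^2 * x^4 * x^6 = x^12" "x^3 * x^4 * x^6 = x^13"
    "x^3 * x^2 * x^6 = x^11"
    by (simp_all flip: power_add)
  have "x^9 * (x^6) ^ (2*n) = (x^3) ^ (4*n+3)" "(x^6) ^ n = (x^3) ^ (2*n)"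
    by (simp_all add: add.commute flip: power_add power_mult)
  then have vwp: "vwp_term (x^3) (x^2) (x^4) (x^6) n
      = (1 - (x^3) ^ (4*n+3)) * (x^3) ^ (2*n) * (P 9 * P 3 * P 2 * P 4) / (P 6 * P 12 * P 13 * P 11)"
    by (simp add: vwp_term_def vwp_num_def vwp_den_def P_def products)
  show ?thesis
    unfolding vwp odd even qshifts D_def[symmetric]
    using P_nonzero D_nonzero by (simp add: field_simps power2_eq_square)
qed

lemma series_value_eq:
  fixes x :: real
  assumes x: "0 < x" "x < 1"
  shows "qnum (x^6) (1/6) * (qpoch_inf (x^4) (x^6) * qpoch_inf (x^2) (x^6)) * (x^3) powr (1/4)
          / (qnum (x^6) (1/3) * qnum (x^6) (2/3) * qnum (x^6) (1/2)
             * (qpoch_inf x (x^6) * qpoch_inf (x^5) (x^6)) * qpi (x^3))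
       = (1 - x^3) / ((1 - x^7) * (1 - x^5)) *
         (qpoch_inf (x^3 * x^2 * x^4) (x^6) * qpoch_inf (x^3) (x^6) * qpoch_inf (x^2) (x^6)
            * qpoch_inf (x^4) (x^6)
          / ((1 - x^3) * (1 - x^2) * (1 - x^4)
             * (qpoch_inf (x^6) (x^6) * qpoch_inf (x^2 * x^4 * x^6) (x^6)
                * qpoch_inf (x^3 * x^4 * x^6) (x^6) * qpoch_inf (x^3 * x^2 * x^6) (x^6))))"
proof -
  define R where "R m = qpoch_inf (x ^ m) (x ^ 6)" for m
  define D where "D m = 1 - x ^ m" for m
  define w where "w = (x^3) powr (1/4)"
  have pow_lt: "x ^ m < 1" if "0 < m" for m
    using x that by (simp add: power_less_one_iff)
  have R_nonzero: "R m \<noteq> 0" if "0 < m" for m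
    unfolding R_def using x pow_lt[OF that] pow_lt[of 6] by (intro qpoch_inf_nonzero) auto
  have D_nonzero: "D m \<noteq> 0" if "0 < m" for m
    using pow_lt[OF that] by (simp add: D_def)
  have shift: "R m = D m * R (m + 6)" for m
    using qpoch_inf_shift[of "x ^ 6" "x ^ m"] pow_lt[of 6] x unfolding R_def D_def
    by (simp add: power_add)
  have first: "qpoch_inf x (x^6) = D 1 * (D 7 * R 13)"
    using shift[of 1] shift[of 7] by (simp add: R_def)
  have qnums: "qnum (x^6) (1/6) = D 1 / D 6" "qnum (x^6) (1/3) = D 2 / D 6"
    "qnum (x^6) (2/3) = D 4 / D 6" "qnum (x^6) (1/2) = D 3 / D 6"
    using x by (simp_all add: qnum_power_base D_def)
  have pi: "qpi (x^3) = D 6 * w * (D 6 * R 12)\<^sup>2 / (D 3 * R 9)\<^sup>2"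
    using shift[of 6] shift[of 3]
    by (simp add: qpi_def w_def D_def R_def flip: power_mult)
  have products: "x^3 * x^2 * x^4 = x^9" "x^2 * x^4 * x^6 = x^12" "x^3 * x^4 * x^6 = x^13"
    "x^3 * x^2 * x^6 = x^11"
    by (simp_all flip: power_add)
  have "w \<noteq> 0"
    using x by (simp add: w_def)
  then show ?thesis
    unfolding first qnums pi products w_def[symmetric] R_def[symmetric] D_def[symmetric]
    using R_nonzero D_nonzero by (simp add: shift[of 3] shift[of 5] shift[of 6] field_simps power2_eq_square)
qed

theorem mainTheorem12:
  fixes q :: real
  assumes "0 < q" and "q < 1"
  shows "(\<lambda>n. (1 - q ^ (4*n+3)) * (1 - q ^ (2*n+1)) * (qshift (q\<^sup>2) (1/2) n)\<^sup>2
              * qshift (q\<^sup>2) (1/3) n * qshift (q\<^sup>2) (2/3) n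
            / ((1 - q\<^sup>2) * (1 - q ^ (2*n+2)) * (qfact (q\<^sup>2) n)\<^sup>2
              * qshift (q\<^sup>2) (7/6) (n+1) * qshift (q\<^sup>2) (5/6) (n+1)) * q ^ (2*n))
    sums (qnum (q\<^sup>2) (1/6) * (qpoch_inf (q powr (4/3)) (q\<^sup>2) * qpoch_inf (q powr (2/3)) (q\<^sup>2))
            * q powr (1/4)
          / (qnum (q\<^sup>2) (1/3) * qnum (q\<^sup>2) (2/3) * qnum (q\<^sup>2) (1/2)
             * (qpoch_inf (q powr (1/3)) (q\<^sup>2) * qpoch_inf (q powr (5/3)) (q\<^sup>2)) * qpi q))"
proof -
  define x where "x = q powr (1/3)"
  have x_pos: "0 < x"
    using assms by (simp add: x_def)
  have q: "q = x ^ 3"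
    using assms by (simp add: x_def powr_realpow [symmetric] powr_powr)
  then have x_lt_1: "x < 1"
    using power_less_imp_less_base[of x 3 1] assms by simp
  have roots: "(x^3) powr (1/3) = x" "(x^3) powr (2/3) = x^2" "(x^3) powr (4/3) = x^4"
    "(x^3) powr (5/3) = x^5" "(x^3)\<^sup>2 = x^6"
    using x_pos by (simp_all add: powr_of_power flip: power_mult)
  have small: "\<bar>x ^ k\<bar> < 1" if "0 < k" for k
    using x_pos x_lt_1 that by (simp add: power_less_one_iff)
  then have "(\<lambda>n. (1 - x^3) / ((1 - x^7) * (1 - x^5)) * vwp_term (x^3) (x^2) (x^4) (x^6) n) sums
      ((1 - x^3) / ((1 - x^7) * (1 - x^5)) *
         (qpoch_inf (x^3 * x^2 * x^4) (x^6) * qpoch_inf (x^3) (x^6) * qpoch_inf (x^2) (x^6)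
            * qpoch_inf (x^4) (x^6)
          / ((1 - x^3) * (1 - x^2) * (1 - x^4)
             * (qpoch_inf (x^6) (x^6) * qpoch_inf (x^2 * x^4 * x^6) (x^6)
                * qpoch_inf (x^3 * x^4 * x^6) (x^6) * qpoch_inf (x^3 * x^2 * x^6) (x^6)))))"
    by (intro sums_mult vwp_sums small) simp_all
  then show ?thesis
    unfolding q roots series_term_eq[OF x_pos x_lt_1] series_value_eq[OF x_pos x_lt_1] .
qed

end
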